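(* Let $\mathcal{G}$ be a network of type $\mathcal{C}^1$ with exactly two stubborn agents $s_1,s_2$, whose opinions evolve by the Friedkin–Johnsen model $\mathbf{x}(k+1)=(I-\beta)W\mathbf{x}(k)+\beta\mathbf{x}(0)$. Let $(a,b,d)$ be a permissible edge modification. Suppose there exists a global communicator $m$ of $\mathcal{G}$ such that, with the sets $\mathcal{T}_1,\dots,\mathcal{T}_4$ defined relative to $m$, the nodes $a$ and $d$ satisfy at least one of the following: (1) (equally neutral) $a\in\mathcal{T}_4$ and $d\in\mathcal{T}_4$; (2) (equally supportive) $a,d\in\mathcal{T}_1$ and every simple path from $m$ to $a$ and every simple path from $m$ to $d$ passes through $s_1$; or $a,d\in\mathcal{T}_2$ and every simple path from $m$ to $a$ and every simple path from $m$ to $d$ passes through $s_2$; (3) (equally connected) there is a node $c$ such that every simple path from $s_1$ or from $s_2$ to $a$ or to $d$ passes through $c$. Then $(a,b,d)$ is redundant, i.e. the influence centralities $c_{s_1}$ and $c_{s_2}$ are the same before and after the modification.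
   Context: Let $\mathcal{G}=(\mathcal{V},\mathcal{E})$, $\mathcal{V}=\{1,\dots,n\}$, be a directed graph, where an edge $(i,j)$ means information flows from $i$ to $j$. Its weighted adjacency matrix $W=[w_{ij}]$ is row-stochastic with $w_{ij}>0$ iff $(j,i)\in\mathcal{E}$ (self-loops allowed). In the Friedkin–Johnsen model, $\beta=\mathrm{diag}(\beta_1,\dots,\beta_n)$ with $\beta_i\in[0,1]$, and agent $i$ is stubborn if $\beta_i>0$. Here exactly two agents $s_1,s_2$ are stubborn, with $\beta_{s_1},\beta_{s_2}\in(0,1)$. The influence centrality vector is $\mathbf{c}=P^T\mathbb{1}_n/n$ with $P=(I_n-(I_n-\beta)W)^{-1}\beta$; $c_i$ is the influence centrality of agent $i$ (and $c_{s_1}+c_{s_2}=1$). Type $\mathcal{C}^1$: $\mathcal{G}$ is strongly connected and some node $m$ belongs to every cycle of $\mathcal{G}$ other than self-loops; such an $m$ is a global communicator. Given a global communicator $m$, a direct path from $i$ to $j$ is a path from $i$ to $j$ that does not pass through $m$. The nodes are classified as: $\mathcal{T}_1$: nodes having a direct path from $s_1$ but not from $s_2$; $\mathcal{T}_2$: direct path from $s_2$ but not from $s_1$; $\mathcal{T}_3$: direct paths from both; $\mathcal{T}_4$: from neither. By convention $s_1\in\mathcal{T}_1$, $s_2\in\mathcal{T}_2$, $m\in\mathcal{T}_3$, except that if $s_1$ has a direct path to $s_2$ then $s_2$ and every node with a direct path from $s_2$ belong to $\mathcal{T}_3$ (so $\mathcal{T}_2=\emptyset$). Edge modification $(a,b,d)$: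 for distinct nodes $a,b,d$ with $w_{bd}>0$ and some $0<w<w_{bd}$, replace $w_{ba}$ by $w_{ba}+w$ (adding edge $(a,b)$ if absent) and $w_{bd}$ by $w_{bd}-w$, so the in-degree (row sum) of $b$ is unchanged. It is permissible if the modified network is still of type $\mathcal{C}^1$. It is redundant if it changes the influence centrality of neither stubborn agent. *)

theory Defs
  imports "HOL-Analysis.Analysis"
begin

text \<open>Nodes are the elements of a finite type 'n (so n = CARD('n)).
  W is the weighted adjacency matrix; W $ i $ j > 0 iff (j,i) is an edge,
  i.e. information flows from j to i.\<close>

definition edge :: "real^'n^'n \<Rightarrow> 'n \<Rightarrow> 'n \<Rightarrow> bool" where
  "edge W i j \<longleftrightarrow> W $ j $ i > 0"

definition row_stochastic :: "real^'n^'n \<Rightarrow> bool" where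
  "row_stochastic W \<longleftrightarrow> (\<forall>i j. W $ i $ j \<ge> 0) \<and> (\<forall>i. (\<Sum>j\<in>UNIV. W $ i $ j) = 1)"

definition walk_edges :: "real^'n^'n \<Rightarrow> 'n list \<Rightarrow> bool" where
  "walk_edges W p \<longleftrightarrow> (\<forall>k. Suc k < length p \<longrightarrow> edge W (p ! k) (p ! Suc k))"

text \<open>Simple path (distinct vertices) from i to j; [i] is the trivial path.\<close>
definition simple_path :: "real^'n^'n \<Rightarrow> 'n list \<Rightarrow> 'n \<Rightarrow> 'n \<Rightarrow> bool" where
  "simple_path W p i j \<longleftrightarrow> p \<noteq> [] \<and> hd p = i \<and> last p = j \<and> distinct p \<and> walk_edges W p"

text \<open>Cycle other than a self-loop: a closed simple walk through at least two nodes.\<close>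
definition cycle :: "real^'n^'n \<Rightarrow> 'n list \<Rightarrow> bool" where
  "cycle W p \<longleftrightarrow> length p \<ge> 2 \<and> distinct p \<and> walk_edges W p \<and> edge W (last p) (hd p)"

definition strongly_connected :: "real^'n^'n \<Rightarrow> bool" where
  "strongly_connected W \<longleftrightarrow> (\<forall>i j. (i, j) \<in> {(u, v). edge W u v}\<^sup>*)"

definition global_communicator :: "real^'n^'n \<Rightarrow> 'n \<Rightarrow> bool" where
  "global_communicator W m \<longleftrightarrow> (\<forall>p. cycle W p \<longrightarrow> m \<in> set p)"

definition type_C1 :: "real^'n^'n \<Rightarrow> bool" where
  "type_C1 W \<longleftrightarrow> strongly_connected W \<and> (\<exists>m. global_communicator W m)"

definition direct_path :: "real^'n^'n \<Rightarrow> 'n \<Rightarrow> 'n \<Rightarrow> 'n \<Rightarrow> bool" where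
  "direct_path W m i j \<longleftrightarrow>
     (\<exists>p. simple_path W p i j \<and> length p \<ge> 2 \<and> m \<notin> set (butlast (tl p)))"

definition T_class :: "real^'n^'n \<Rightarrow> 'n \<Rightarrow> 'n \<Rightarrow> 'n \<Rightarrow> 'n \<Rightarrow> nat" where
  "T_class W m s1 s2 x =
    (let D1 = direct_path W m s1; D2 = direct_path W m s2; flag = D1 s2 in
     if x = m then 3
     else if x = s1 then 1
     else if x = s2 then (if flag then 3 else 2)
     else if flag \<and> D2 x then 3
     else if D1 x \<and> \<not> D2 x then 1
     else if D2 x \<and> \<not> D1 x then 2
     else if D1 x \<and> D2 x then 3
     else 4)"

definition diag_mat :: "real^'n \<Rightarrow> real^'n^'n" where
  "diag_mat v = (\<chi> i j. if i = j then v $ i else 0)"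

definition FJ_P :: "real^'n \<Rightarrow> real^'n^'n \<Rightarrow> real^'n^'n" where
  "FJ_P bv W = matrix_inv (mat 1 - (mat 1 - diag_mat bv) ** W) ** diag_mat bv"

definition influence_centrality :: "real^'n \<Rightarrow> real^'n^'n \<Rightarrow> 'n \<Rightarrow> real" where
  "influence_centrality bv W i = (\<Sum>j\<in>UNIV. FJ_P bv W $ j $ i) / real CARD('n)"

definition edge_mod :: "real^'n^'n \<Rightarrow> 'n \<Rightarrow> 'n \<Rightarrow> 'n \<Rightarrow> real \<Rightarrow> real^'n^'n" where
  "edge_mod W a b d w =
     (\<chi> i j. if i = b \<and> j = a then W $ b $ a + w
             else if i = b \<and> j = d then W $ b $ d - w
             else W $ i $ j)"

definition valid_edge_mod :: "real^'n^'n \<Rightarrow> 'n \<Rightarrow> 'n \<Rightarrow> 'n \<Rightarrow> real \<Rightarrow> bool" where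
  "valid_edge_mod W a b d w \<longleftrightarrow> a \<noteq> b \<and> b \<noteq> d \<and> a \<noteq> d \<and> W $ b $ d > 0 \<and> 0 < w \<and> w < W $ b $ d"

definition permissible :: "real^'n^'n \<Rightarrow> 'n \<Rightarrow> 'n \<Rightarrow> 'n \<Rightarrow> real \<Rightarrow> bool" where
  "permissible W a b d w \<longleftrightarrow> valid_edge_mod W a b d w \<and> type_C1 (edge_mod W a b d w)"

definition redundant :: "real^'n \<Rightarrow> real^'n^'n \<Rightarrow> 'n \<Rightarrow> 'n \<Rightarrow> 'n \<Rightarrow> 'n \<Rightarrow> 'n \<Rightarrow> real \<Rightarrow> bool" where
  "redundant bv W s1 s2 a b d w \<longleftrightarrow>
     influence_centrality bv (edge_mod W a b d w) s1 = influence_centrality bv W s1 \<and>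
     influence_centrality bv (edge_mod W a b d w) s2 = influence_centrality bv W s2"

definition all_paths_through :: "real^'n^'n \<Rightarrow> 'n \<Rightarrow> 'n \<Rightarrow> 'n \<Rightarrow> bool" where
  "all_paths_through W i j c \<longleftrightarrow> (\<forall>p. simple_path W p i j \<longrightarrow> c \<in> set p)"

end

theory Submission
  imports Defs "HOL-Library.Transitive_Closure_Table"
begin

text \<open>Every column of \<open>P = (I - (I - \<beta>) W)\<^sup>-\<^sup>1 \<beta>\<close> is harmonic for \<open>W\<close> at each
  non-stubborn node: there it equals its \<open>W\<close>-weighted average. If every path from a stubborn
  agent to \<open>t\<close> passes through \<open>c\<close>, the maximum principle on the set of nodes that reach \<open>t\<close>
  while avoiding \<open>c\<close> forces every such harmonic function to take the same value at \<open>t\<close> and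
  at \<open>c\<close>. Each of the three conditions provides a common cut vertex for \<open>a\<close> and \<open>d\<close>
  (namely \<open>m\<close>, \<open>s\<^sub>1\<close>, \<open>s\<^sub>2\<close> or the given \<open>c\<close>), so the rows of \<open>P\<close> at \<open>a\<close> and \<open>d\<close> agree.
  Shifting weight in row \<open>b\<close> from column \<open>d\<close> to column \<open>a\<close> therefore preserves
  \<open>(I - (I - \<beta>) W) P = \<beta>\<close>, and since the modified matrix is again invertible, \<open>P\<close> is unchanged.\<close>

section \<open>Maximum principle for row-stochastic matrices\<close>

lemma row_stochastic_average_le:
  fixes W :: "real^'n^'n" and y :: "'n \<Rightarrow> real"
  assumes "row_stochastic W" "\<And>k. y k \<le> M"
  shows "(\<Sum>k\<in>UNIV. W$i$k * y k) \<le> M"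
proof -
  have "(\<Sum>k\<in>UNIV. W$i$k * y k) \<le> (\<Sum>k\<in>UNIV. W$i$k * M)"
    using assms by (intro sum_mono mult_left_mono) (auto simp: row_stochastic_def)
  also have "\<dots> = M"
    using assms(1) by (simp add: row_stochastic_def flip: sum_distrib_right)
  finally show ?thesis .
qed

lemma sub_average_at_maximum:
  fixes W :: "real^'n^'n" and y :: "'n \<Rightarrow> real"
  assumes rs: "row_stochastic W"
    and max: "\<And>k. y k \<le> y v"
    and sub: "y v \<le> (\<Sum>k\<in>UNIV. W$v$k * y k)"
    and e: "edge W u v"
  shows "y u = y v"
proof -
  have nonneg: "0 \<le> W$v$k * (y v - y k)" for k
    using rs max by (simp add: row_stochastic_def)
  have "(\<Sum>k\<in>UNIV. W$v$k * (y v - y k)) = y v - (\<Sum>k\<in>UNIV. W$v$k * y k)"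
    using rs by (simp add: row_stochastic_def algebra_simps sum_subtractf
        sum_distrib_left[symmetric])
  moreover have "0 \<le> (\<Sum>k\<in>UNIV. W$v$k * (y v - y k))"
    by (rule sum_nonneg) (rule nonneg)
  ultimately have "(\<Sum>k\<in>UNIV. W$v$k * (y v - y k)) = 0"
    using sub by linarith
  then have "W$v$u * (y v - y u) = 0"
    using sum_nonneg_eq_0_iff[of UNIV "\<lambda>k. W$v$k * (y v - y k)"] nonneg by simp
  then show ?thesis
    using e by (simp add: edge_def)
qed

lemma strongly_connected_backward_closed:
  assumes sc: "strongly_connected W" and v: "v \<in> S"
    and closed: "\<And>u v. v \<in> S \<Longrightarrow> edge W u v \<Longrightarrow> u \<in> S"
  shows "u \<in> S"
proof -
  have "(u, v) \<in> {(u, v). edge W u v}\<^sup>*"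
    using sc by (simp add: strongly_connected_def)
  then show ?thesis
    by (induction rule: converse_rtrancl_induct) (use v closed in auto)
qed

lemma subharmonic_at_maxima_imp_constant:
  fixes W :: "real^'n^'n" and y :: "'n \<Rightarrow> real"
  assumes rs: "row_stochastic W" and sc: "strongly_connected W"
    and sub: "\<And>v. y v = Max (range y) \<Longrightarrow> y v \<le> (\<Sum>k\<in>UNIV. W$v$k * y k)"
  shows "y u = Max (range y)"
proof -
  let ?M = "Max (range y)"
  have le: "y k \<le> ?M" for k
    by simp
  have "?M \<in> range y"
    by (rule Max_in) auto
  then obtain v where "y v = ?M"
    by (metis rangeE)
  moreover have "y u = ?M" if "y v = ?M" "edge W u v" for u v
  proof -
    have "y k \<le> y v" for k
      using le that(1) by simp
    then show ?thesis
      using sub_average_at_maximum[OF rs _ sub[OF that(1)] that(2)] that(1) by simp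
  qed
  ultimately show ?thesis
    using strongly_connected_backward_closed[OF sc, of v "{v. y v = ?M}"] by blast
qed

lemma maximum_principle_at_cut_vertex:
  fixes W :: "real^'n^'n" and y :: "'n \<Rightarrow> real"
  assumes rs: "row_stochastic W" and sc: "strongly_connected W"
    and c: "c \<notin> A"
    and sources: "\<And>u v. v \<in> A \<Longrightarrow> edge W u v \<Longrightarrow> u \<in> A \<or> u = c"
    and sub: "\<And>v. v \<in> A \<Longrightarrow> y v \<le> (\<Sum>k\<in>UNIV. W$v$k * y k)"
    and v: "v \<in> A"
  shows "y v \<le> y c"
proof -
  \<comment> \<open>Freezing \<open>y\<close> at \<open>y c\<close> outside \<open>A\<close> reduces the claim to: \<open>z\<close> attains its maximum at \<open>c\<close>.\<close>
  define z where "z = (\<lambda>u. if u \<in> A then y u else y c)"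
  let ?M = "Max (range z)"
  have agree: "W$u$k * z k = W$u$k * y k" if "u \<in> A" for u k
  proof (cases "W$u$k = 0")
    case False
    then have "edge W k u"
      using rs by (simp add: edge_def row_stochastic_def order_neq_le_trans)
    then show ?thesis
      using sources[OF that] by (auto simp: z_def)
  qed simp
  have z_sub: "z u \<le> (\<Sum>k\<in>UNIV. W$u$k * z k)" if "u \<in> A" for u
  proof -
    have "(\<Sum>k\<in>UNIV. W$u$k * z k) = (\<Sum>k\<in>UNIV. W$u$k * y k)"
      using agree[OF that] by (rule sum.cong[OF refl])
    moreover have "z u = y u"
      using that by (simp add: z_def)
    ultimately show ?thesis
      using sub[OF that] by simp
  qed
  have "z c = ?M"
  proof (rule ccontr)
    assume "z c \<noteq> ?M"
    then have "z u = ?M \<Longrightarrow> u \<in> A" for u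
      by (auto simp: z_def split: if_splits)
    then show False
      using subharmonic_at_maxima_imp_constant[OF rs sc, of z c] z_sub \<open>z c \<noteq> ?M\<close> by blast
  qed
  moreover have "z v \<le> ?M"
    by simp
  ultimately show ?thesis
    using c v by (simp add: z_def)
qed

lemma harmonic_eq_at_cut_vertex:
  fixes W :: "real^'n^'n" and y :: "'n \<Rightarrow> real"
  assumes rs: "row_stochastic W" and sc: "strongly_connected W"
    and c: "c \<notin> A"
    and sources: "\<And>u v. v \<in> A \<Longrightarrow> edge W u v \<Longrightarrow> u \<in> A \<or> u = c"
    and harm: "\<And>v. v \<in> A \<Longrightarrow> y v = (\<Sum>k\<in>UNIV. W$v$k * y k)"
    and v: "v \<in> A"
  shows "y v = y c"
proof -
  have "y v \<le> y c"
    using maximum_principle_at_cut_vertex[OF rs sc c sources _ v, where y = y] harm by simp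
  moreover have "- y v \<le> - y c"
    using maximum_principle_at_cut_vertex[OF rs sc c sources _ v, where y = "\<lambda>k. - y k"] harm
    by (simp add: sum_negf)
  ultimately show ?thesis
    by simp
qed

lemma simple_path_within:
  assumes "(\<lambda>u v. edge W u v \<and> v \<in> V)\<^sup>*\<^sup>* s t" and "s \<in> V"
  shows "\<exists>p. simple_path W p s t \<and> set p \<subseteq> V"
proof -
  let ?R = "\<lambda>u v. edge W u v \<and> v \<in> V"
  obtain xs where "rtrancl_path ?R s xs t"
    using assms(1) by (auto simp: rtranclp_eq_rtrancl_path)
  then obtain ys where ys: "rtrancl_path ?R s ys t" "distinct (s # ys)"
    by (rule rtrancl_path_distinct)
  have "last (s # ys) = t"
    using ys(1) rtrancl_path_last[OF ys(1)] by (cases ys) (auto elim: rtrancl_path.cases)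
  moreover have "walk_edges W (s # ys)"
    using rtrancl_path_nth[OF ys(1)] by (auto simp: walk_edges_def)
  moreover have "set ys \<subseteq> V"
    using rtrancl_path_Range[OF ys(1)] by blast
  ultimately show ?thesis
    using ys(2) assms(2) by (intro exI[of _ "s # ys"]) (auto simp: simple_path_def)
qed

lemma harmonic_eq_across_cut_vertex:
  fixes W :: "real^'n^'n" and x :: "'n \<Rightarrow> real"
  assumes rs: "row_stochastic W" and sc: "strongly_connected W"
    and harm: "\<And>v. v \<notin> S \<Longrightarrow> x v = (\<Sum>k\<in>UNIV. W$v$k * x k)"
    and cut: "\<And>s. s \<in> S \<Longrightarrow> all_paths_through W s t c"
  shows "x t = x c"
proof (cases "t = c")
  case False
  let ?R = "\<lambda>u v. edge W u v \<and> v \<in> - {c}"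
  define A where "A = {v. v \<noteq> c \<and> ?R\<^sup>*\<^sup>* v t}"
  have "A \<inter> S = {}"
  proof (intro equals0I)
    fix s
    assume "s \<in> A \<inter> S"
    then obtain p where "simple_path W p s t" "set p \<subseteq> - {c}"
      using simple_path_within[of W "- {c}" s t] by (auto simp: A_def)
    then show False
      using cut \<open>s \<in> A \<inter> S\<close> by (auto simp: all_paths_through_def)
  qed
  moreover have "u \<in> A \<or> u = c" if "v \<in> A" "edge W u v" for u v
    using that by (auto simp: A_def intro: converse_rtranclp_into_rtranclp)
  moreover have "t \<in> A" "c \<notin> A"
    using False by (auto simp: A_def)
  ultimately show ?thesis
    using harmonic_eq_at_cut_vertex[OF rs sc, of c A x t] harm by blast
qed simp

section \<open>Common cut vertices from the classification of nodes\<close>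

lemma all_paths_through_start: "all_paths_through W s t s"
  by (auto simp: all_paths_through_def simple_path_def intro: list.set_sel(1))

lemma all_paths_through_end: "all_paths_through W s t t"
  by (auto simp: all_paths_through_def simple_path_def intro: last_in_set)

lemma simple_path_drop:
  assumes "simple_path W p s t" "i < length p"
  shows "simple_path W (drop i p) (p!i) t"
  using assms by (auto simp: simple_path_def walk_edges_def hd_drop_conv_nth)

lemma all_paths_through_if_no_direct_path:
  assumes st: "s \<noteq> t" and no_direct: "m \<noteq> s \<Longrightarrow> \<not> direct_path W m s t"
    and from_m: "all_paths_through W m t c"
  shows "all_paths_through W s t c"
  unfolding all_paths_through_def
proof (intro allI impI)
  fix p
  assume p: "simple_path W p s t"
  have "m \<in> set p"
  proof (cases "m = s")
    case False
    have "length p \<ge> 2"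
      using p st by (cases p; cases "tl p") (auto simp: simple_path_def)
    then have "m \<in> set (butlast (tl p))"
      using no_direct[OF False] p by (auto simp: direct_path_def)
    then show ?thesis
      by (cases p) (auto dest: in_set_butlastD)
  qed (use p in \<open>auto simp: simple_path_def\<close>)
  then obtain i where "i < length p" "p!i = m"
    by (auto simp: in_set_conv_nth)
  then have "c \<in> set (drop i p)"
    using simple_path_drop[OF p] from_m by (auto simp: all_paths_through_def)
  then show "c \<in> set p"
    using set_drop_subset by fast
qed

lemma T_class_4_D:
  "T_class W m s1 s2 t = 4 \<Longrightarrow>
    t \<noteq> s1 \<and> t \<noteq> s2 \<and> \<not> direct_path W m s1 t \<and> \<not> direct_path W m s2 t"
  unfolding T_class_def Let_def by (auto split: if_splits)

lemma T_class_1_D: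
  "T_class W m s1 s2 t = 1 \<Longrightarrow> t = s1 \<or> t \<noteq> s2 \<and> \<not> direct_path W m s2 t"
  unfolding T_class_def Let_def by (auto split: if_splits)

lemma T_class_2_D:
  "T_class W m s1 s2 t = 2 \<Longrightarrow> t = s2 \<or> t \<noteq> s1 \<and> \<not> direct_path W m s1 t"
  unfolding T_class_def Let_def by (auto split: if_splits)

lemma T_class_4_cut_vertex:
  assumes "T_class W m s1 s2 t = 4" "s \<in> {s1, s2}"
  shows "all_paths_through W s t m"
  using T_class_4_D[OF assms(1)] assms(2)
  by (auto intro: all_paths_through_if_no_direct_path[where m = m] all_paths_through_start)

lemma T_class_1_cut_vertex:
  assumes "T_class W m s1 s2 t = 1" "all_paths_through W m t s1" "s \<in> {s1, s2}"
  shows "all_paths_through W s t s1"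
proof (cases "s = s1 \<or> t = s1")
  case False
  then show ?thesis
    using T_class_1_D[OF assms(1)] assms(2,3)
    by (auto intro: all_paths_through_if_no_direct_path[where m = m])
qed (use all_paths_through_start all_paths_through_end in blast)

lemma T_class_2_cut_vertex:
  assumes "T_class W m s1 s2 t = 2" "all_paths_through W m t s2" "s \<in> {s1, s2}"
  shows "all_paths_through W s t s2"
proof (cases "s = s2 \<or> t = s2")
  case False
  then show ?thesis
    using T_class_2_D[OF assms(1)] assms(2,3)
    by (auto intro: all_paths_through_if_no_direct_path[where m = m])
qed (use all_paths_through_start all_paths_through_end in blast)

lemma common_cut_vertex:
  assumes "(T_class W m s1 s2 a = 4 \<and> T_class W m s1 s2 d = 4)
       \<or> (T_class W m s1 s2 a = 1 \<and> T_class W m s1 s2 d = 1 \<and>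
           all_paths_through W m a s1 \<and> all_paths_through W m d s1)
       \<or> (T_class W m s1 s2 a = 2 \<and> T_class W m s1 s2 d = 2 \<and>
           all_paths_through W m a s2 \<and> all_paths_through W m d s2)
       \<or> (\<exists>c. \<forall>s\<in>{s1, s2}. \<forall>t\<in>{a, d}. all_paths_through W s t c)"
  shows "\<exists>c. \<forall>s\<in>{s1, s2}. \<forall>t\<in>{a, d}. all_paths_through W s t c"
  using assms T_class_4_cut_vertex[of W m s1 s2] T_class_1_cut_vertex[of W m s1 s2]
    T_class_2_cut_vertex[of W m s1 s2]
  by blast

section \<open>The Friedkin--Johnsen matrix\<close>

definition FJ_M :: "real^'n \<Rightarrow> real^'n^'n \<Rightarrow> real^'n^'n" where
  "FJ_M bv W = mat 1 - (mat 1 - diag_mat bv) ** W"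

lemma FJ_P_eq: "FJ_P bv W = matrix_inv (FJ_M bv W) ** diag_mat bv"
  by (simp add: FJ_P_def FJ_M_def)

lemma matrix_inv_left: "invertible A \<Longrightarrow> matrix_inv A ** A = mat 1"
  and matrix_inv_right: "invertible A \<Longrightarrow> A ** matrix_inv A = mat 1"
  using someI_ex[of "\<lambda>B. A ** B = mat 1 \<and> B ** A = mat 1"]
  by (auto simp: invertible_def matrix_inv_def)

lemma mat_1_minus_diag_mat: "mat 1 - diag_mat v = diag_mat (1 - v)"
  by (simp add: vec_eq_iff mat_def diag_mat_def)

lemma diag_mat_mult_vec_nth: "(diag_mat v *v x) $ i = v$i * x$i"
  by (simp add: matrix_vector_mult_def diag_mat_def if_distrib if_distribR cong: if_cong)

lemma matrix_mult_nth_column: "(A ** B) $ i $ j = (A *v column j B) $ i"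
  by (simp add: matrix_matrix_mult_def matrix_vector_mult_def column_def)

lemma FJ_M_mult_vec_nth:
  "(FJ_M bv W *v x) $ i = x$i - (1 - bv$i) * (\<Sum>k\<in>UNIV. W$i$k * x$k)"
proof -
  have "FJ_M bv W *v x = x - diag_mat (1 - bv) *v (W *v x)"
    by (simp add: FJ_M_def mat_1_minus_diag_mat matrix_vector_mult_diff_rdistrib
        matrix_vector_mul_assoc)
  then show ?thesis
    by (simp only: vector_minus_component diag_mat_mult_vec_nth)
      (simp add: matrix_vector_mult_def)
qed

lemma FJ_M_mult_nth:
  "(FJ_M bv W ** P) $ i $ j = P$i$j - (1 - bv$i) * (\<Sum>k\<in>UNIV. W$i$k * P$k$j)"
  by (simp add: matrix_mult_nth_column FJ_M_mult_vec_nth column_def)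

lemma FJ_M_kernel_nonpos:
  fixes W :: "real^'n^'n"
  assumes rs: "row_stochastic W" and sc: "strongly_connected W"
    and beta: "\<forall>i. 0 \<le> bv$i \<and> bv$i \<le> 1" and stubborn: "0 < bv$s"
    and ker: "FJ_M bv W *v x = 0"
  shows "x$i \<le> 0"
proof (rule ccontr)
  define M where "M = Max (range (($) x))"
  let ?avg = "\<lambda>v. \<Sum>k\<in>UNIV. W$v$k * x$k"
  assume "\<not> x$i \<le> 0"
  moreover have "x$i \<le> M"
    by (simp add: M_def)
  ultimately have M_pos: "0 < M"
    by linarith
  have fixpoint: "x$v = (1 - bv$v) * ?avg v" for v
    using arg_cong[OF ker, of "\<lambda>y. y$v"] by (simp add: FJ_M_mult_vec_nth)
  have avg_le: "?avg v \<le> M" for v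
    by (rule row_stochastic_average_le[OF rs, of "($) x"]) (simp add: M_def)
  have sub: "x$v \<le> ?avg v" if "x$v = M" for v
  proof -
    have "0 < (1 - bv$v) * ?avg v"
      using fixpoint[of v] that M_pos by simp
    then have "0 < ?avg v"
      using beta[rule_format, of v] by (auto simp: zero_less_mult_iff)
    then have "0 \<le> bv$v * ?avg v"
      using beta by simp
    moreover have "x$v = ?avg v - bv$v * ?avg v"
      using fixpoint[of v] by (simp add: left_diff_distrib)
    ultimately show ?thesis
      by linarith
  qed
  have const: "x$v = M" for v
    unfolding M_def
    by (rule subharmonic_at_maxima_imp_constant[OF rs sc]) (rule sub, simp add: M_def)
  have "?avg s = M"
    using rs by (simp add: const row_stochastic_def flip: sum_distrib_right)
  then have "M = (1 - bv$s) * M"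
    using fixpoint[of s] const by simp
  then show False
    using M_pos stubborn by (simp add: algebra_simps)
qed

lemma FJ_M_invertible:
  fixes W :: "real^'n^'n"
  assumes rs: "row_stochastic W" and sc: "strongly_connected W"
    and beta: "\<forall>i. 0 \<le> bv$i \<and> bv$i \<le> 1" and stubborn: "0 < bv$s"
  shows "invertible (FJ_M bv W)"
  unfolding invertible_left_inverse matrix_left_invertible_ker
proof (intro allI impI)
  fix x
  assume ker: "FJ_M bv W *v x = 0"
  then have "FJ_M bv W *v (-x) = 0"
    using matrix_vector_mult_diff_distrib[of "FJ_M bv W" 0 x] by simp
  then have "x$i \<le> 0" "(-x)$i \<le> 0" for i
    using FJ_M_kernel_nonpos[OF rs sc beta stubborn] ker by blast+
  then show "x = 0"
    by (simp add: vec_eq_iff order.antisym)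
qed

lemma FJ_M_mult_FJ_P:
  "invertible (FJ_M bv W) \<Longrightarrow> FJ_M bv W ** FJ_P bv W = diag_mat bv"
  by (simp add: FJ_P_eq matrix_mul_assoc matrix_inv_right)

lemma FJ_P_unique:
  assumes "invertible (FJ_M bv W)" "FJ_M bv W ** P = diag_mat bv"
  shows "FJ_P bv W = P"
  using assms by (simp add: FJ_P_eq matrix_mul_assoc matrix_inv_left flip: assms(2))

lemma FJ_P_harmonic_at_non_stubborn:
  assumes "invertible (FJ_M bv W)" "bv$v = 0"
  shows "FJ_P bv W $ v $ j = (\<Sum>k\<in>UNIV. W$v$k * FJ_P bv W $ k $ j)"
  using arg_cong[OF FJ_M_mult_FJ_P[OF assms(1)], of "\<lambda>A. A$v$j"] assms(2)
  by (simp add: FJ_M_mult_nth diag_mat_def split: if_splits)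

lemma edge_mod_row_sum:
  assumes "a \<noteq> d"
  shows "(\<Sum>k\<in>UNIV. edge_mod W a b d w $ i $ k * x k) =
    (\<Sum>k\<in>UNIV. W$i$k * x k) + (if i = b then w * (x a - x d) else 0)"
proof (cases "i = b")
  case True
  have "(\<Sum>k\<in>UNIV. edge_mod W a b d w $ i $ k * x k) =
    (\<Sum>k\<in>UNIV. W$i$k * x k + (if k = a then w * x a else 0) - (if k = d then w * x d else 0))"
    using assms True by (intro sum.cong) (auto simp: edge_mod_def algebra_simps)
  then show ?thesis
    using True by (simp add: sum.distrib sum_subtractf algebra_simps)
qed (simp add: edge_mod_def)

lemma row_stochastic_edge_mod:
  assumes rs: "row_stochastic W" and valid: "valid_edge_mod W a b d w"
  shows "row_stochastic (edge_mod W a b d w)"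
proof -
  have "0 \<le> edge_mod W a b d w $ i $ j" for i j
  proof -
    have "\<forall>i j. 0 \<le> W$i$j" "0 < w" "w < W$b$d"
      using rs valid by (auto simp: row_stochastic_def valid_edge_mod_def)
    then show ?thesis
      by (simp add: edge_mod_def)
  qed
  moreover have "(\<Sum>j\<in>UNIV. edge_mod W a b d w $ i $ j) = 1" for i
    using edge_mod_row_sum[of a d W b w i "\<lambda>_. 1"] rs valid
    by (simp add: row_stochastic_def valid_edge_mod_def)
  ultimately show ?thesis
    by (simp add: row_stochastic_def)
qed

lemma FJ_M_edge_mod_mult:
  assumes "a \<noteq> d" "\<And>j. P$a$j = P$d$j"
  shows "FJ_M bv (edge_mod W a b d w) ** P = FJ_M bv W ** P"
proof -
  have "(\<Sum>k\<in>UNIV. edge_mod W a b d w $ i $ k * P$k$j) = (\<Sum>k\<in>UNIV. W$i$k * P$k$j)" for i j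
    using edge_mod_row_sum[OF assms(1), of W b w i "\<lambda>k. P$k$j"] assms(2) by simp
  then show ?thesis
    by (simp add: vec_eq_iff FJ_M_mult_nth)
qed

theorem theorem1:
  fixes W :: "real^'n^'n" and bv :: "real^'n" and s1 s2 a b d :: 'n and w :: real
  assumes rs: "row_stochastic W"
    and C1: "type_C1 W"
    and beta_range: "\<forall>i. 0 \<le> bv $ i \<and> bv $ i \<le> 1"
    and s_dist: "s1 \<noteq> s2"
    and beta_s1: "0 < bv $ s1 \<and> bv $ s1 < 1"
    and beta_s2: "0 < bv $ s2 \<and> bv $ s2 < 1"
    and only_two: "\<forall>i. i \<noteq> s1 \<and> i \<noteq> s2 \<longrightarrow> bv $ i = 0"
    and perm: "permissible W a b d w"
    and cond: "\<exists>m. global_communicator W m \<and>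
       ( (T_class W m s1 s2 a = 4 \<and> T_class W m s1 s2 d = 4)
       \<or> (T_class W m s1 s2 a = 1 \<and> T_class W m s1 s2 d = 1 \<and>
           all_paths_through W m a s1 \<and> all_paths_through W m d s1)
       \<or> (T_class W m s1 s2 a = 2 \<and> T_class W m s1 s2 d = 2 \<and>
           all_paths_through W m a s2 \<and> all_paths_through W m d s2)
       \<or> (\<exists>c. \<forall>s\<in>{s1, s2}. \<forall>t\<in>{a, d}. all_paths_through W s t c))"
  shows "redundant bv W s1 s2 a b d w"
proof -
  obtain c where cut: "\<forall>s\<in>{s1, s2}. \<forall>t\<in>{a, d}. all_paths_through W s t c"
    using cond common_cut_vertex by blast
  define W' where "W' = edge_mod W a b d w"
  have valid: "valid_edge_mod W a b d w" and "type_C1 W'"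
    using perm by (auto simp: permissible_def W'_def)
  then have rs': "row_stochastic W'" and sc': "strongly_connected W'"
    using row_stochastic_edge_mod[OF rs] by (auto simp: W'_def type_C1_def)
  have sc: "strongly_connected W"
    using C1 by (simp add: type_C1_def)
  have inv: "invertible (FJ_M bv W)" and inv': "invertible (FJ_M bv W')"
    using FJ_M_invertible[OF rs sc beta_range] FJ_M_invertible[OF rs' sc' beta_range] beta_s1
    by auto
  define P where "P = FJ_P bv W"
  have "P$t$j = P$c$j" if "t \<in> {a, d}" for t j
    using harmonic_eq_across_cut_vertex[OF rs sc, of "{s1, s2}" "\<lambda>k. P$k$j"] cut that
      FJ_P_harmonic_at_non_stubborn[OF inv] only_two
    by (auto simp: P_def)
  then have "FJ_M bv W' ** P = FJ_M bv W ** P"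
    unfolding W'_def using valid by (intro FJ_M_edge_mod_mult) (auto simp: valid_edge_mod_def)
  also have "\<dots> = diag_mat bv"
    unfolding P_def by (rule FJ_M_mult_FJ_P[OF inv])
  finally have "FJ_P bv W' = P"
    by (rule FJ_P_unique[OF inv'])
  then show ?thesis
    by (simp add: redundant_def influence_centrality_def W'_def P_def)
qed

end
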